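(* Let $\Delta\subset\mathbb{R}^n_{\ge0}$ be a Newton polyhedron with a loose edge $E$ whose endpoints are $a,b\in\mathbb{R}^n_{\ge0}$. Then for every $c\in\Delta$ and every $\xi\in\mathbb{R}^n_{\ge0}$ with $\langle\xi,a\rangle=\langle\xi,b\rangle$ one has $\langle\xi,c\rangle\ge\langle\xi,a\rangle$.
   Context: A Newton polyhedron is a set of the form $\mathrm{conv}(S)+\mathbb{R}^n_{\ge0}$ (convex hull of $S+\mathbb{R}^n_{\ge0}$) for a nonempty finite set $S\subset\mathbb{Z}^n_{\ge0}$. For $\xi\in\mathbb{R}^n_{\ge0}$, the face $\Delta^\xi=\{a\in\Delta:\langle\xi,a\rangle=\min_{b\in\Delta}\langle\xi,b\rangle\}$; it is compact iff $\xi\in\mathbb{R}^n_{>0}$. An edge is a face of dimension 1; a loose edge is a compact edge not contained in any compact face of dimension $\ge2$. *)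

theory Defs
  imports "HOL-Analysis.Analysis"
begin

definition nonneg_orthant :: "(real^'n) set" where
  "nonneg_orthant = {x. \<forall>i. 0 \<le> x $ i}"

definition newton_polyhedron :: "(real^'n) set \<Rightarrow> bool" where
  "newton_polyhedron \<Delta> \<longleftrightarrow>
     (\<exists>S. finite S \<and> S \<noteq> {} \<and> S \<subseteq> {x. \<forall>i. x $ i \<in> \<int> \<and> 0 \<le> x $ i} \<and>
          \<Delta> = {p + q | p q. p \<in> convex hull S \<and> q \<in> nonneg_orthant})"

definition face_xi :: "(real^'n) set \<Rightarrow> real^'n \<Rightarrow> (real^'n) set" where
  "face_xi \<Delta> \<xi> = {a \<in> \<Delta>. \<forall>b \<in> \<Delta>. \<xi> \<bullet> a \<le> \<xi> \<bullet> b}"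

definition newton_face :: "(real^'n) set \<Rightarrow> (real^'n) set \<Rightarrow> bool" where
  "newton_face \<Delta> F \<longleftrightarrow> (\<exists>\<xi> \<in> nonneg_orthant. F = face_xi \<Delta> \<xi>)"

definition loose_edge :: "(real^'n) set \<Rightarrow> (real^'n) set \<Rightarrow> bool" where
  "loose_edge \<Delta> E \<longleftrightarrow>
     newton_face \<Delta> E \<and> compact E \<and> aff_dim E = 1 \<and>
     \<not> (\<exists>F. newton_face \<Delta> F \<and> compact F \<and> aff_dim F \<ge> 2 \<and> E \<subseteq> F)"

end

theory Submission imports Defs begin

text \<open>Suppose some c in Delta had xi c < xi a. The loose edge is the face of a weight xi0, which
  is strictly positive because that face is compact. Tilting xi0 towards xi by the largest amount T
  for which a stays a minimiser over the finitely many generators gives a strictly positive weight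
  xi0 + T xi; its face is compact, contains the edge (as xi a = xi b) and a generator s0 with
  xi s0 < xi a, which lies off the line through a and b. So the edge sits in a compact face of
  dimension at least 2, contradicting looseness.\<close>

definition orthant_hull :: "(real^'n) set \<Rightarrow> (real^'n) set" where
  "orthant_hull S = {p + q | p q. p \<in> convex hull S \<and> q \<in> nonneg_orthant}"

lemma inner_nonneg_orthant:
  assumes "\<eta> \<in> nonneg_orthant" "q \<in> nonneg_orthant"
  shows "0 \<le> \<eta> \<bullet> (q::real^'n)"
  using assms unfolding nonneg_orthant_def inner_vec_def by (auto intro!: sum_nonneg)

lemma closed_nonneg_orthant: "closed (nonneg_orthant :: (real^'n) set)"
proof -
  have eq: "nonneg_orthant = (\<Inter>i. {x::real^'n. 0 \<le> x $ i})"
    unfolding nonneg_orthant_def by auto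
  have "closed {x::real^'n. 0 \<le> x $ i}" for i
    by (intro closed_Collect_le continuous_intros)
  then show ?thesis unfolding eq by (intro closed_INT) auto
qed

lemma orthant_hull_subset: "S \<subseteq> orthant_hull S"
proof
  fix s assume "s \<in> S"
  moreover have "0 \<in> nonneg_orthant" by (simp add: nonneg_orthant_def)
  ultimately show "s \<in> orthant_hull S"
    unfolding orthant_hull_def by (force intro: hull_inc)
qed

lemma orthant_hull_add_orthant:
  assumes "x \<in> orthant_hull S" "r \<in> nonneg_orthant"
  shows "x + r \<in> orthant_hull S"
proof -
  obtain p q where "x = p + q" "p \<in> convex hull S" "q \<in> nonneg_orthant"
    using assms(1) unfolding orthant_hull_def by auto
  moreover have "q + r \<in> nonneg_orthant"
    using \<open>q \<in> nonneg_orthant\<close> assms(2) by (simp add: nonneg_orthant_def)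
  ultimately show ?thesis unfolding orthant_hull_def by (metis (mono_tags, lifting) add.assoc mem_Collect_eq)
qed

lemma orthant_hull_inner_ge:
  assumes "\<eta> \<in> nonneg_orthant" "\<forall>s\<in>S. m \<le> \<eta> \<bullet> s" "c \<in> orthant_hull S"
  shows "m \<le> \<eta> \<bullet> c"
proof -
  obtain p q where c: "c = p + q" and p: "p \<in> convex hull S" and q: "q \<in> nonneg_orthant"
    using assms(3) unfolding orthant_hull_def by auto
  have "convex hull S \<subseteq> {x. m \<le> \<eta> \<bullet> x}"
    using assms(2) by (intro hull_minimal) (auto simp: convex_halfspace_ge)
  with p have "m \<le> \<eta> \<bullet> p" by auto
  with inner_nonneg_orthant[OF assms(1) q] show ?thesis by (simp add: c inner_add_right)
qed

lemma closed_orthant_hull: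
  assumes "finite S"
  shows "closed (orthant_hull S)"
proof -
  have "orthant_hull S = (\<Union>x\<in>nonneg_orthant. \<Union>y\<in>convex hull S. {x + y})"
    unfolding orthant_hull_def by (auto simp: add.commute) (metis add.commute)
  then show ?thesis
    using closed_compact_sums[OF closed_nonneg_orthant finite_imp_compact_convex_hull[OF assms]]
    by simp
qed

text \<open>A strictly positive weight bounds every coordinate of the orthant part of a point.\<close>
lemma bounded_sublevel_orthant_hull:
  assumes "finite S" and pos: "\<forall>i. 0 < \<eta> $ i"
  shows "bounded (orthant_hull S \<inter> {x. \<eta> \<bullet> x \<le> m})"
proof -
  obtain K where K: "\<forall>p\<in>convex hull S. norm p \<le> K"
    using bounded_iff compact_imp_bounded finite_imp_compact_convex_hull[OF assms(1)] by blast
  define M where "M = m + norm \<eta> * K"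
  have "norm x \<le> K + (\<Sum>i\<in>UNIV. M / \<eta> $ i)"
    if x: "x \<in> orthant_hull S \<inter> {x. \<eta> \<bullet> x \<le> m}" for x
  proof -
    obtain p q where xpq: "x = p + q" and p: "p \<in> convex hull S" and q: "q \<in> nonneg_orthant"
      using x unfolding orthant_hull_def by auto
    have "\<bar>\<eta> \<bullet> p\<bar> \<le> norm \<eta> * K"
      using Cauchy_Schwarz_ineq2[of \<eta> p] mult_left_mono[OF K[rule_format, OF p] norm_ge_zero[of \<eta>]]
      by linarith
    with x have qM: "\<eta> \<bullet> q \<le> M" unfolding M_def xpq by (auto simp: inner_add_right abs_le_iff)
    have q0: "\<forall>j. 0 \<le> q $ j" using q unfolding nonneg_orthant_def by auto
    have "\<bar>q $ i\<bar> \<le> M / \<eta> $ i" for i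
    proof -
      have "\<eta> $ i * q $ i \<le> (\<Sum>j\<in>UNIV. \<eta> $ j * q $ j)"
        by (rule member_le_sum) (use q0 pos in \<open>auto simp: less_imp_le\<close>)
      with qM have "\<eta> $ i * q $ i \<le> M" by (simp add: inner_vec_def)
      with pos q0 show ?thesis by (simp add: pos_le_divide_eq mult.commute)
    qed
    then have "(\<Sum>i\<in>UNIV. \<bar>q $ i\<bar>) \<le> (\<Sum>i\<in>UNIV. M / \<eta> $ i)" by (rule sum_mono)
    moreover have "norm x \<le> norm p + norm q" unfolding xpq by (rule norm_triangle_ineq)
    ultimately show ?thesis using norm_le_l1_cart[of q] K p by fastforce
  qed
  then show ?thesis unfolding bounded_iff by blast
qed

lemma face_xi_eq_sublevel:
  assumes "a \<in> face_xi \<Delta> \<eta>"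
  shows "face_xi \<Delta> \<eta> = \<Delta> \<inter> {x. \<eta> \<bullet> x \<le> \<eta> \<bullet> a}"
  using assms unfolding face_xi_def by (force intro: order_trans)

lemma face_xi_inner_eq:
  assumes "a \<in> face_xi \<Delta> \<xi>" "b \<in> face_xi \<Delta> \<xi>"
  shows "\<xi> \<bullet> a = \<xi> \<bullet> b"
  using assms unfolding face_xi_def by (auto intro: order_antisym)

lemma compact_face_xi_orthant_hull:
  assumes "finite S" "\<forall>i. 0 < \<eta> $ i"
  shows "compact (face_xi (orthant_hull S) \<eta>)"
proof (cases "face_xi (orthant_hull S) \<eta> = {}")
  case False
  then obtain a where "a \<in> face_xi (orthant_hull S) \<eta>" by blast
  then show ?thesis
    unfolding face_xi_eq_sublevel[OF \<open>a \<in> _\<close>] compact_eq_bounded_closed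
    using bounded_sublevel_orthant_hull[OF assms] closed_orthant_hull[OF assms(1)]
    by (simp add: closed_Int closed_halfspace_le)
qed simp

text \<open>A zero coordinate of the weight would let the face contain a whole ray.\<close>
lemma compact_face_xi_imp_weight_pos:
  fixes \<Delta> :: "(real^'n) set"
  assumes up: "\<And>x r. x \<in> \<Delta> \<Longrightarrow> r \<in> nonneg_orthant \<Longrightarrow> x + r \<in> \<Delta>"
    and "\<xi> \<in> nonneg_orthant" "compact (face_xi \<Delta> \<xi>)" "a \<in> face_xi \<Delta> \<xi>"
  shows "0 < \<xi> $ i"
proof (rule ccontr)
  assume "\<not> 0 < \<xi> $ i"
  with assms(2) have z: "\<xi> $ i = 0" unfolding nonneg_orthant_def by (metis mem_Collect_eq order_le_less)
  obtain B where B: "\<forall>x\<in>face_xi \<Delta> \<xi>. norm x \<le> B"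
    using compact_imp_bounded[OF assms(3)] bounded_iff by blast
  define t where "t = B + norm a + 1"
  have "norm a \<le> B" using B assms(4) by blast
  then have t0: "0 \<le> t" using norm_ge_zero[of a] unfolding t_def by linarith
  define x where "x = a + t *\<^sub>R axis i 1"
  have "t *\<^sub>R axis i 1 \<in> nonneg_orthant"
    using t0 unfolding nonneg_orthant_def by (auto simp: axis_def)
  moreover have "a \<in> \<Delta>" using assms(4) unfolding face_xi_def by blast
  ultimately have "x \<in> \<Delta>" unfolding x_def by (rule up[rotated])
  moreover have "\<xi> \<bullet> x = \<xi> \<bullet> a" unfolding x_def using z by (simp add: inner_add_right inner_axis)
  ultimately have "norm x \<le> B" using B assms(4) unfolding face_xi_def by auto
  moreover have "t \<le> norm x + norm a"
    using norm_triangle_ineq4[of x a] t0 by (simp add: x_def)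
  ultimately show False unfolding t_def by linarith
qed

text \<open>T is the least of the ratios r s over the generators s that xi ranks below a, i.e. the
  largest tilt keeping a minimal on S; a generator s0 attaining it joins a on the new face.\<close>
lemma exists_maximal_tilt:
  fixes \<xi>0 \<xi> a :: "'a::real_inner"
  assumes "finite S" "\<forall>s\<in>S. \<xi>0 \<bullet> a \<le> \<xi>0 \<bullet> s" "\<exists>s\<in>S. \<xi> \<bullet> s < \<xi> \<bullet> a"
  obtains T s0 where "0 \<le> T" "s0 \<in> S" "\<xi> \<bullet> s0 < \<xi> \<bullet> a"
    "(\<xi>0 + T *\<^sub>R \<xi>) \<bullet> s0 = (\<xi>0 + T *\<^sub>R \<xi>) \<bullet> a"
    "\<forall>s\<in>S. (\<xi>0 + T *\<^sub>R \<xi>) \<bullet> a \<le> (\<xi>0 + T *\<^sub>R \<xi>) \<bullet> s"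
proof -
  define B where "B = {s\<in>S. \<xi> \<bullet> s < \<xi> \<bullet> a}"
  define r where "r s = (\<xi>0 \<bullet> s - \<xi>0 \<bullet> a) / (\<xi> \<bullet> a - \<xi> \<bullet> s)" for s
  have "finite B" "B \<noteq> {}" using assms(1,3) unfolding B_def by auto
  then have "Min (r ` B) \<in> r ` B" by (intro Min_in) auto
  then obtain s0 where s0: "s0 \<in> B" "Min (r ` B) = r s0" by blast
  define T where "T = r s0"
  have Tle: "T \<le> r s" if "s \<in> B" for s
    unfolding T_def s0(2)[symmetric] using that \<open>finite B\<close> by simp
  have s0S: "s0 \<in> S" and s0lt: "\<xi> \<bullet> s0 < \<xi> \<bullet> a" using s0 B_def by auto
  have T0: "0 \<le> T" unfolding T_def r_def using assms(2) s0S s0lt by simp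
  have "T * (\<xi> \<bullet> a - \<xi> \<bullet> s0) = \<xi>0 \<bullet> s0 - \<xi>0 \<bullet> a"
    unfolding T_def r_def using s0lt by simp
  then have "(\<xi>0 + T *\<^sub>R \<xi>) \<bullet> s0 = (\<xi>0 + T *\<^sub>R \<xi>) \<bullet> a"
    by (simp add: inner_add_left algebra_simps)
  moreover have "(\<xi>0 + T *\<^sub>R \<xi>) \<bullet> a \<le> (\<xi>0 + T *\<^sub>R \<xi>) \<bullet> s" if sS: "s \<in> S" for s
  proof (cases "\<xi> \<bullet> s < \<xi> \<bullet> a")
    case True
    with Tle sS have "T * (\<xi> \<bullet> a - \<xi> \<bullet> s) \<le> \<xi>0 \<bullet> s - \<xi>0 \<bullet> a"
      unfolding r_def B_def by (simp add: le_divide_eq)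
    then show ?thesis by (simp add: inner_add_left algebra_simps)
  next
    case False
    with T0 have "T * (\<xi> \<bullet> a) \<le> T * (\<xi> \<bullet> s)" by (simp add: mult_left_mono)
    moreover have "\<xi>0 \<bullet> a \<le> \<xi>0 \<bullet> s" using assms(2) sS by blast
    ultimately show ?thesis by (simp add: inner_add_left algebra_simps)
  qed
  ultimately show thesis using that T0 s0S s0lt by blast
qed

lemma exists_tilted_positive_face:
  fixes \<xi>0 \<xi> a :: "real^'n"
  assumes "finite S" "\<xi>0 \<in> nonneg_orthant" "compact (face_xi (orthant_hull S) \<xi>0)"
    "a \<in> face_xi (orthant_hull S) \<xi>0" "\<xi> \<in> nonneg_orthant" "\<exists>s\<in>S. \<xi> \<bullet> s < \<xi> \<bullet> a"
  obtains T s0 where "s0 \<in> S" "\<xi> \<bullet> s0 < \<xi> \<bullet> a" "\<forall>i. 0 < (\<xi>0 + T *\<^sub>R \<xi>) $ i"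
    "a \<in> face_xi (orthant_hull S) (\<xi>0 + T *\<^sub>R \<xi>)" "s0 \<in> face_xi (orthant_hull S) (\<xi>0 + T *\<^sub>R \<xi>)"
proof -
  have "\<forall>s\<in>S. \<xi>0 \<bullet> a \<le> \<xi>0 \<bullet> s"
    using assms(4) orthant_hull_subset[of S] unfolding face_xi_def by blast
  then obtain T s0 where T: "0 \<le> T" "s0 \<in> S" "\<xi> \<bullet> s0 < \<xi> \<bullet> a"
      "(\<xi>0 + T *\<^sub>R \<xi>) \<bullet> s0 = (\<xi>0 + T *\<^sub>R \<xi>) \<bullet> a"
    and amin: "\<forall>s\<in>S. (\<xi>0 + T *\<^sub>R \<xi>) \<bullet> a \<le> (\<xi>0 + T *\<^sub>R \<xi>) \<bullet> s"
    using exists_maximal_tilt[OF assms(1) _ assms(6)] by blast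
  have "0 < \<xi>0 $ i" for i
    using compact_face_xi_imp_weight_pos[OF orthant_hull_add_orthant assms(2-4)] by blast
  then have pos: "\<forall>i. 0 < (\<xi>0 + T *\<^sub>R \<xi>) $ i"
    using assms(5) T(1) unfolding nonneg_orthant_def by (simp add: add_pos_nonneg)
  then have "\<xi>0 + T *\<^sub>R \<xi> \<in> nonneg_orthant" unfolding nonneg_orthant_def by (simp add: less_imp_le)
  from orthant_hull_inner_ge[OF this amin]
  have "a \<in> face_xi (orthant_hull S) (\<xi>0 + T *\<^sub>R \<xi>)" "s0 \<in> face_xi (orthant_hull S) (\<xi>0 + T *\<^sub>R \<xi>)"
    using assms(4) T(2,4) orthant_hull_subset[of S] unfolding face_xi_def by auto
  with that T(2,3) pos show thesis by blast
qed

lemma closed_segment_subset_face_xi: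
  assumes "a \<in> face_xi \<Delta> \<eta>" "\<eta> \<bullet> a = \<eta> \<bullet> b" "closed_segment a b \<subseteq> \<Delta>"
  shows "closed_segment a b \<subseteq> face_xi \<Delta> \<eta>"
proof
  fix x assume x: "x \<in> closed_segment a b"
  then obtain u where "x = (1 - u) *\<^sub>R a + u *\<^sub>R b" unfolding closed_segment_def by auto
  then have "\<eta> \<bullet> x = (1 - u) * (\<eta> \<bullet> a) + u * (\<eta> \<bullet> b)" by (simp add: inner_add_right)
  also have "\<dots> = \<eta> \<bullet> a" using assms(2) by (simp add: algebra_simps)
  finally have "\<eta> \<bullet> x = \<eta> \<bullet> a" .
  with assms x show "x \<in> face_xi \<Delta> \<eta>" unfolding face_xi_def by auto
qed

lemma not_in_affine_hull_2_if_inner_neq: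
  assumes "\<xi> \<bullet> a = \<xi> \<bullet> b" "\<xi> \<bullet> s \<noteq> \<xi> \<bullet> a"
  shows "s \<notin> affine hull {a, b}"
proof
  assume "s \<in> affine hull {a, b}"
  then obtain u v where uv: "s = u *\<^sub>R a + v *\<^sub>R b" "u + v = 1" unfolding affine_hull_2 by auto
  then have "\<xi> \<bullet> s = u * (\<xi> \<bullet> a) + v * (\<xi> \<bullet> b)" by (simp add: inner_add_right)
  also have "\<dots> = (u + v) * (\<xi> \<bullet> a)" using assms(1) by (simp add: distrib_right)
  finally show False using uv(2) assms(2) by simp
qed

lemma aff_dim_ge_2_if_not_collinear:
  fixes F :: "'a::euclidean_space set"
  assumes "a \<noteq> b" "s \<notin> affine hull {a, b}" "{s, a, b} \<subseteq> F"
  shows "2 \<le> aff_dim F"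
  using assms aff_dim_subset[OF assms(3)] by (simp add: aff_dim_insert)

theorem lemma2p1:
  fixes \<Delta> E :: "(real^'n) set" and a b c \<xi> :: "real^'n"
  assumes "newton_polyhedron \<Delta>"
    and "loose_edge \<Delta> E"
    and "E = closed_segment a b"
    and "a \<noteq> b"
    and "c \<in> \<Delta>"
    and "\<xi> \<in> nonneg_orthant"
    and "\<xi> \<bullet> a = \<xi> \<bullet> b"
  shows "\<xi> \<bullet> c \<ge> \<xi> \<bullet> a"
proof (rule ccontr)
  assume c: "\<not> \<xi> \<bullet> c \<ge> \<xi> \<bullet> a"
  obtain S where "finite S" and \<Delta>: "\<Delta> = orthant_hull S"
    using assms(1) unfolding newton_polyhedron_def orthant_hull_def by blast
  have "\<exists>s\<in>S. \<xi> \<bullet> s < \<xi> \<bullet> a"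
    using orthant_hull_inner_ge[OF assms(6) _ assms(5)[unfolded \<Delta>]] c by (meson not_le)
  obtain \<xi>0 where "\<xi>0 \<in> nonneg_orthant" and E: "E = face_xi \<Delta> \<xi>0" and "compact E"
    using assms(2) unfolding loose_edge_def newton_face_def by blast
  have aE: "a \<in> E" and bE: "b \<in> E" using assms(3) by auto
  obtain T s0 where "s0 \<in> S" "\<xi> \<bullet> s0 < \<xi> \<bullet> a" and pos: "\<forall>i. 0 < (\<xi>0 + T *\<^sub>R \<xi>) $ i"
    and "a \<in> face_xi \<Delta> (\<xi>0 + T *\<^sub>R \<xi>)" "s0 \<in> face_xi \<Delta> (\<xi>0 + T *\<^sub>R \<xi>)"
    by (rule exists_tilted_positive_face[OF \<open>finite S\<close> \<open>\<xi>0 \<in> _\<close> \<open>compact E\<close>[unfolded E \<Delta>]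
      aE[unfolded E \<Delta>] assms(6) \<open>\<exists>s\<in>S. _\<close>, folded \<Delta>])
  define F where "F = face_xi \<Delta> (\<xi>0 + T *\<^sub>R \<xi>)"
  have "\<xi>0 + T *\<^sub>R \<xi> \<in> nonneg_orthant" using pos unfolding nonneg_orthant_def by (simp add: less_imp_le)
  then have "newton_face \<Delta> F" unfolding newton_face_def F_def by blast
  have "compact F" unfolding F_def \<Delta> by (rule compact_face_xi_orthant_hull[OF \<open>finite S\<close> pos])
  have "(\<xi>0 + T *\<^sub>R \<xi>) \<bullet> a = (\<xi>0 + T *\<^sub>R \<xi>) \<bullet> b"
    using face_xi_inner_eq[OF aE[unfolded E] bE[unfolded E]] assms(7) by (simp add: inner_add_left)
  moreover have "E \<subseteq> \<Delta>" unfolding E face_xi_def by blast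
  ultimately have "E \<subseteq> F"
    unfolding F_def assms(3) by (rule closed_segment_subset_face_xi[OF \<open>a \<in> face_xi \<Delta> _\<close>])
  have "2 \<le> aff_dim F"
  proof (rule aff_dim_ge_2_if_not_collinear[OF assms(4)])
    show "s0 \<notin> affine hull {a, b}"
      using not_in_affine_hull_2_if_inner_neq[OF assms(7)] \<open>\<xi> \<bullet> s0 < \<xi> \<bullet> a\<close> by simp
    show "{s0, a, b} \<subseteq> F" using \<open>s0 \<in> face_xi \<Delta> _\<close> \<open>E \<subseteq> F\<close> aE bE unfolding F_def by blast
  qed
  with assms(2) \<open>newton_face \<Delta> F\<close> \<open>compact F\<close> \<open>E \<subseteq> F\<close> show False
    unfolding loose_edge_def by blast
qed

end
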